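(* Let $H_{44}$ and $H_{521}$ be the term-normalized complete homogeneous symmetric polynomials in three variables $x_1,x_2,x_3$ associated to the partitions $(4,4)$ and $(5,2,1)$ of $8$. Then the polynomial $(H_{44}-H_{521})(x_1^2,x_2^2,x_3^2)$ is a sum of squares of polynomials with rational coefficients (in fact a positive rational combination of $41$ squares), so $H_{44}-H_{521}\ge 0$ on $\mathbb{R}^3_{\ge 0}$, while the partitions $(4,4)$ and $(5,2,1)$ are incomparable in dominance order. Thus $H_{44}-H_{521}$ is a counterexample to the statement "$H_\mu - H_\lambda \geq 0$ on the nonnegative orthant implies $\mu$ dominates $\lambda$", and it is degree-minimal: there is no pair of dominance-incomparable partitions $\lambda,\mu$ with $|\lambda|=|\mu|\le 7$ such that $H_\mu-H_\lambda\ge 0$ on the nonnegative orthant.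
   Context: For an integer $d\ge 0$, $h_d(x_1,\dots,x_n)$ denotes the sum of all monomials of degree $d$ in $x_1,\dots,x_n$ (with $h_0=1$), and for a partition $\lambda=(\lambda_1\ge\lambda_2\ge\cdots)$ one sets $h_\lambda=\prod_i h_{\lambda_i}$. The term-normalized version is $H_\lambda(x)=h_\lambda(x)/h_\lambda(1,\dots,1)$. For partitions $\lambda,\mu$ of the same integer, $\mu$ dominates $\lambda$ (written $\mu\succeq\lambda$) if $\mu_1+\cdots+\mu_k\ge\lambda_1+\cdots+\lambda_k$ for all $k$; $\lambda,\mu$ are incomparable if neither dominates the other. A polynomial is a sum of squares if it equals $\sum_i d_i q_i^2$ with $d_i>0$ and $q_i$ polynomials. Explicitly, $(H_{44}-H_{521})(x_1^2,x_2^2,x_3^2)=\frac{1}{9450}\big(17\sum x_i^{16}+9\sum_{i\ne j} x_i^{14}x_j^{2}+\sum_{i\ne j}x_i^{12}x_j^4+18\sum_{i\ne j}x_i^{10}x_j^6+60\sum_{i<j}x_i^8x_j^8-32\sum x_i^{12}x_j^2x_k^2-6\cdot(\ldots)\big)$ as given in the paper; its nonnegativity is meant on $\mathbb{R}^3_{\ge0}$ for the three-variable polynomial. *)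

theory Defs
  imports Complex_Main
begin

definition is_partition :: "nat list \<Rightarrow> bool" where
  "is_partition lam \<longleftrightarrow> sorted_wrt (\<ge>) lam \<and> 0 \<notin> set lam"

definition dominates :: "nat list \<Rightarrow> nat list \<Rightarrow> bool" where
  "dominates mu lam \<longleftrightarrow> sum_list mu = sum_list lam \<and>
     (\<forall>k. sum_list (take k lam) \<le> sum_list (take k mu))"

definition incomparable :: "nat list \<Rightarrow> nat list \<Rightarrow> bool" where
  "incomparable lam mu \<longleftrightarrow> \<not> dominates mu lam \<and> \<not> dominates lam mu"

definition hcomp :: "nat \<Rightarrow> nat \<Rightarrow> (nat \<Rightarrow> real) \<Rightarrow> real" where
  "hcomp n d x = (\<Sum>\<alpha> \<in> {\<alpha>::nat \<Rightarrow> nat. (\<forall>i\<ge>n. \<alpha> i = 0) \<and> (\<Sum>i<n. \<alpha> i) = d}.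
                    \<Prod>i<n. x i ^ \<alpha> i)"

definition hpart :: "nat \<Rightarrow> nat list \<Rightarrow> (nat \<Rightarrow> real) \<Rightarrow> real" where
  "hpart n lam x = prod_list (map (\<lambda>d. hcomp n d x) lam)"

definition Hnorm :: "nat \<Rightarrow> nat list \<Rightarrow> (nat \<Rightarrow> real) \<Rightarrow> real" where
  "Hnorm n lam x = hpart n lam x / hpart n lam (\<lambda>_. 1)"

definition vec3 :: "real \<Rightarrow> real \<Rightarrow> real \<Rightarrow> nat \<Rightarrow> real" where
  "vec3 a b c = (\<lambda>i. if i = 0 then a else if i = 1 then b else c)"

definition ratpoly3 :: "(real \<Rightarrow> real \<Rightarrow> real \<Rightarrow> real) \<Rightarrow> bool" where
  "ratpoly3 q \<longleftrightarrow> (\<exists>N (c :: nat \<Rightarrow> nat \<Rightarrow> nat \<Rightarrow> rat). \<forall>a b e.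
      q a b e = (\<Sum>i\<le>N. \<Sum>j\<le>N. \<Sum>k\<le>N. of_rat (c i j k) * a ^ i * b ^ j * e ^ k))"

definition rat_sos3 :: "nat \<Rightarrow> (real \<Rightarrow> real \<Rightarrow> real \<Rightarrow> real) \<Rightarrow> bool" where
  "rat_sos3 m P \<longleftrightarrow> (\<exists>(ds :: rat list) qs. length ds = m \<and> length qs = m \<and>
      (\<forall>d\<in>set ds. d > 0) \<and> (\<forall>q\<in>set qs. ratpoly3 q) \<and>
      (\<forall>a b e. P a b e = (\<Sum>i<m. of_rat (ds ! i) * ((qs ! i) a b e)\<^sup>2)))"

definition nonneg_orthant :: "nat \<Rightarrow> (nat \<Rightarrow> real) \<Rightarrow> bool" where
  "nonneg_orthant n x \<longleftrightarrow> (\<forall>i<n. x i \<ge> 0)"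

end

theory Submission
  imports Defs
begin

(* In three variables h_d(1,1,1) = (d+2 choose 2), so 9450 (H_44 - H_521) = 42 h_4^2 - 25 h_5 h_2 h_1
   is an explicit octic form. Evaluated at squares it is a positive rational combination of 41
   squares, obtained from LDL^T factorisations of Gram matrices; nonnegativity on the orthant
   follows by writing x_i = a_i^2. As H_44 = H_521 at (1,1,1), every square vanishes there, so each
   is a combination of differences m - m0 of monomials; the exponent parities of the monomials split
   the squares into four blocks. For minimality, there are only six incomparable pairs of partitions
   of size at most 7, and for each ordered pair an explicit point of the orthant makes
   H_mu - H_lambda negative. *)

lemma hcomp_3_eq:
  "hcomp 3 d x = (\<Sum>i\<le>d. \<Sum>j\<le>d - i. x 0 ^ i * x 1 ^ j * x 2 ^ (d - i - j))"
proof -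
  define S where "S = {\<alpha>::nat \<Rightarrow> nat. (\<forall>i\<ge>3. \<alpha> i = 0) \<and> (\<Sum>i<3. \<alpha> i) = d}"
  define T where "T = (SIGMA i:{..d}. {..d - i})"
  define f where "f = (\<lambda>(i, j) n::nat. if n = 0 then i else if n = 1 then j else if n = 2 then d - i - j else 0)"
  define g where "g = (\<lambda>\<alpha>::nat \<Rightarrow> nat. (\<alpha> 0, \<alpha> 1))"
  have sum_3: "(\<Sum>i<3. \<alpha> i) = \<alpha> 0 + \<alpha> 1 + \<alpha> (2::nat)" for \<alpha> :: "nat \<Rightarrow> nat"
    by (simp add: eval_nat_numeral)
  have bij: "bij_betw f T S"
  proof (rule bij_betw_byWitness[where f' = g])
    show "\<forall>p\<in>T. g (f p) = p"
      by (auto simp: T_def f_def g_def)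
    show "\<forall>\<alpha>\<in>S. f (g \<alpha>) = \<alpha>"
    proof
      fix \<alpha> assume "\<alpha> \<in> S"
      then have "\<forall>i\<ge>3. \<alpha> i = 0" and "\<alpha> 0 + \<alpha> 1 + \<alpha> 2 = d"
        by (auto simp: S_def sum_3)
      then show "f (g \<alpha>) = \<alpha>"
        by (auto simp: f_def g_def fun_eq_iff numeral_3_eq_3 less_Suc_eq not_less)
    qed
    show "f ` T \<subseteq> S" and "g ` S \<subseteq> T"
      by (auto simp: T_def S_def f_def g_def sum_3)
  qed
  have "hcomp 3 d x = (\<Sum>p\<in>T. \<Prod>i<3. x i ^ f p i)"
    using sum.reindex_bij_betw[OF bij, of "\<lambda>\<alpha>. \<Prod>i<3. x i ^ \<alpha> i"] by (simp add: hcomp_def S_def)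
  also have "\<dots> = (\<Sum>(i, j)\<in>T. x 0 ^ i * x 1 ^ j * x 2 ^ (d - i - j))"
    by (rule sum.cong) (auto simp: f_def eval_nat_numeral)
  also have "\<dots> = (\<Sum>i\<le>d. \<Sum>j\<le>d - i. x 0 ^ i * x 1 ^ j * x 2 ^ (d - i - j))"
    by (simp add: T_def sum.Sigma)
  finally show ?thesis .
qed

lemma Hnorm_3_vec3: "Hnorm 3 lam (vec3 (x 0) (x 1) (x 2)) = Hnorm 3 lam x"
  by (simp add: Hnorm_def hpart_def hcomp_3_eq vec3_def)

definition monomial_symmetric3 :: "nat \<times> nat \<times> nat \<Rightarrow> real \<Rightarrow> real \<Rightarrow> real \<Rightarrow> real" where
  "monomial_symmetric3 m A B C = (case m of (i, j, k) \<Rightarrow>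
     \<Sum>(p, q, r) \<leftarrow> remdups [(i, j, k), (i, k, j), (j, i, k), (j, k, i), (k, i, j), (k, j, i)].
       A ^ p * B ^ q * C ^ r)"

definition form_44_521 :: "real \<Rightarrow> real \<Rightarrow> real \<Rightarrow> real" where
  "form_44_521 A B C =
     17 * monomial_symmetric3 (8, 0, 0) A B C + 9 * monomial_symmetric3 (7, 1, 0) A B C
   + monomial_symmetric3 (6, 2, 0) A B C + 18 * monomial_symmetric3 (5, 3, 0) A B C
   + 60 * monomial_symmetric3 (4, 4, 0) A B C - 32 * monomial_symmetric3 (6, 1, 1) A B C
   - 48 * monomial_symmetric3 (5, 2, 1) A B C + 11 * monomial_symmetric3 (4, 3, 1) A B C
   - 22 * monomial_symmetric3 (4, 2, 2) A B C - 5 * monomial_symmetric3 (3, 3, 2) A B C"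

lemma Hnorm_44_minus_521:
  "Hnorm 3 [4, 4] (vec3 A B C) - Hnorm 3 [5, 2, 1] (vec3 A B C) = form_44_521 A B C / 9450"
proof -
  have ones: "hcomp 3 1 (\<lambda>_. 1) = 3" "hcomp 3 2 (\<lambda>_. 1) = 6"
    "hcomp 3 4 (\<lambda>_. 1) = 15" "hcomp 3 5 (\<lambda>_. 1) = 21"
    by (simp_all add: hcomp_3_eq atMost_nat_numeral)
  have "Hnorm 3 [4, 4] (vec3 A B C) - Hnorm 3 [5, 2, 1] (vec3 A B C)
      = (42 * hcomp 3 4 (vec3 A B C) ^ 2
         - 25 * (hcomp 3 5 (vec3 A B C) * hcomp 3 2 (vec3 A B C) * hcomp 3 1 (vec3 A B C))) / 9450"
    by (simp add: Hnorm_def hpart_def ones power2_eq_square field_simps del: One_nat_def)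
  also have "\<dots> = form_44_521 A B C / 9450"
    by (simp add: hcomp_3_eq vec3_def atMost_nat_numeral form_44_521_def monomial_symmetric3_def) algebra
  finally show ?thesis .
qed

lemma sum_if_const_cond: "(\<Sum>x\<in>A. if P then f x else 0) = (if P then sum f A else 0)"
  by simp

lemma sum_atMost_if_le:
  fixes N M :: nat
  assumes "N \<le> M"
  shows "(\<Sum>i\<le>M. if i \<le> N then g i else 0) = (\<Sum>i\<le>N. g i)"
proof -
  have "{i \<in> {..M}. i \<le> N} = {..N}"
    using assms by auto
  then show ?thesis
    by (simp flip: sum.inter_filter)
qed

lemma ratpoly3_pad:
  assumes "N \<le> M"
  shows "(\<Sum>i\<le>N. \<Sum>j\<le>N. \<Sum>k\<le>N. of_rat (c i j k) * a ^ i * b ^ j * e ^ k)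
       = (\<Sum>i\<le>M. \<Sum>j\<le>M. \<Sum>k\<le>M.
            of_rat (if i \<le> N \<and> j \<le> N \<and> k \<le> N then c i j k else 0) * a ^ i * b ^ j * (e::real) ^ k)"
proof -
  have split: "of_rat (if i \<le> N \<and> j \<le> N \<and> k \<le> N then c i j k else 0) * a ^ i * b ^ j * e ^ k
      = (if i \<le> N then if j \<le> N then if k \<le> N then of_rat (c i j k) * a ^ i * b ^ j * e ^ k
         else 0 else 0 else 0)" for i j k
    by simp
  show ?thesis
    using assms by (simp only: split sum_if_const_cond sum_atMost_if_le)
qed

lemma ratpoly3_add:
  assumes "ratpoly3 f" and "ratpoly3 g"
  shows "ratpoly3 (\<lambda>a b e. f a b e + g a b e)"
proof -
  obtain N c where f: "\<forall>a b e. f a b e = (\<Sum>i\<le>N. \<Sum>j\<le>N. \<Sum>k\<le>N. of_rat (c i j k) * a ^ i * b ^ j * e ^ k)"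
    using assms(1) unfolding ratpoly3_def by blast
  obtain N' c' where g: "\<forall>a b e. g a b e = (\<Sum>i\<le>N'. \<Sum>j\<le>N'. \<Sum>k\<le>N'. of_rat (c' i j k) * a ^ i * b ^ j * e ^ k)"
    using assms(2) unfolding ratpoly3_def by blast
  define M where "M = max N N'"
  define d where "d i j k = (if i \<le> N \<and> j \<le> N \<and> k \<le> N then c i j k else 0)
    + (if i \<le> N' \<and> j \<le> N' \<and> k \<le> N' then c' i j k else 0)" for i j k
  have sum: "f a b e + g a b e = (\<Sum>i\<le>M. \<Sum>j\<le>M. \<Sum>k\<le>M. of_rat (d i j k) * a ^ i * b ^ j * e ^ k)" for a b e
    unfolding f[rule_format] g[rule_format] ratpoly3_pad[of N M, OF max.cobounded1[of N N', folded M_def]]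
      ratpoly3_pad[of N' M, OF max.cobounded2[of N' N, folded M_def]]
    by (simp add: d_def of_rat_add distrib_right sum.distrib del: of_rat_eq_0_iff)
  show ?thesis
    unfolding ratpoly3_def by (intro exI[of _ M] exI[of _ d] allI sum)
qed

lemma ratpoly3_cmult:
  assumes "ratpoly3 f"
  shows "ratpoly3 (\<lambda>a b e. of_rat q * f a b e)"
proof -
  obtain N c where f: "\<forall>a b e. f a b e = (\<Sum>i\<le>N. \<Sum>j\<le>N. \<Sum>k\<le>N. of_rat (c i j k) * a ^ i * b ^ j * e ^ k)"
    using assms unfolding ratpoly3_def by blast
  have scaled: "of_rat q * f a b e = (\<Sum>i\<le>N. \<Sum>j\<le>N. \<Sum>k\<le>N. of_rat (q * c i j k) * a ^ i * b ^ j * e ^ k)" for a b e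
    by (simp add: f[rule_format] of_rat_mult sum_distrib_left mult.assoc)
  show ?thesis
    unfolding ratpoly3_def by (intro exI[of _ N] exI[of _ "\<lambda>i j k. q * c i j k"] allI scaled)
qed

lemma ratpoly3_monomial: "ratpoly3 (\<lambda>a b e. a ^ i * b ^ j * e ^ k)"
proof -
  define N where "N = i + j + k"
  have monomial: "a ^ i * b ^ j * e ^ k = (\<Sum>i'\<le>N. \<Sum>j'\<le>N. \<Sum>k'\<le>N.
      of_rat (if i' = i \<and> j' = j \<and> k' = k then 1 else 0) * a ^ i' * b ^ j' * (e::real) ^ k')" for a b e
  proof -
    have "of_rat (if i' = i \<and> j' = j \<and> k' = k then 1 else 0) * a ^ i' * b ^ j' * e ^ k'
        = (if i' = i then if j' = j then if k' = k then a ^ i * b ^ j * e ^ k else 0 else 0 else 0)"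
      for i' j' k'
      by simp
    then show ?thesis
      by (simp only: sum_if_const_cond sum.delta finite_atMost) (simp add: N_def)
  qed
  show ?thesis
    unfolding ratpoly3_def
    by (intro exI[of _ N] exI[of _ "\<lambda>i' j' k'. if i' = i \<and> j' = j \<and> k' = k then 1 else 0"] allI monomial)
qed

lemma ratpoly3_diff:
  assumes "ratpoly3 f" and "ratpoly3 g"
  shows "ratpoly3 (\<lambda>a b e. f a b e - g a b e)"
  using ratpoly3_add[OF assms(1) ratpoly3_cmult[OF assms(2), of "-1"]] by simp

definition monomial3 :: "nat \<times> nat \<times> nat \<Rightarrow> real \<Rightarrow> real \<Rightarrow> real \<Rightarrow> real" where
  "monomial3 m a b e = (case m of (i, j, k) \<Rightarrow> a ^ i * b ^ j * e ^ k)"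

definition monomial_diff_comb ::
  "nat \<times> nat \<times> nat \<Rightarrow> (rat \<times> nat \<times> nat \<times> nat) list \<Rightarrow> real \<Rightarrow> real \<Rightarrow> real \<Rightarrow> real" where
  "monomial_diff_comb m0 ts a b e = (\<Sum>(c, m) \<leftarrow> ts. of_rat c * (monomial3 m a b e - monomial3 m0 a b e))"

lemma ratpoly3_monomial3: "ratpoly3 (monomial3 m)"
  by (cases m rule: prod_cases3) (simp add: monomial3_def[abs_def] ratpoly3_monomial)

lemma ratpoly3_monomial_diff_comb: "ratpoly3 (monomial_diff_comb m0 ts)"
proof (induction ts)
  case Nil
  have "monomial_diff_comb m0 [] = (\<lambda>a b e. of_rat 0 * monomial3 m0 a b e)"
    by (simp add: monomial_diff_comb_def fun_eq_iff del: of_rat_0)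
  then show ?case
    by (simp only: ratpoly3_cmult ratpoly3_monomial3)
next
  case (Cons t ts)
  obtain c m where t: "t = (c, m)"
    by (cases t)
  have "monomial_diff_comb m0 (t # ts)
      = (\<lambda>a b e. of_rat c * (monomial3 m a b e - monomial3 m0 a b e) + monomial_diff_comb m0 ts a b e)"
    by (simp add: monomial_diff_comb_def t fun_eq_iff)
  then show ?case
    using Cons.IH by (simp add: ratpoly3_add ratpoly3_cmult ratpoly3_diff ratpoly3_monomial3)
qed

lemma rat_sos3_sum_list:
  assumes "\<forall>(d, q) \<in> set dqs. 0 < d \<and> ratpoly3 q"
    and "\<And>a b e. P a b e = (\<Sum>(d, q) \<leftarrow> dqs. of_rat d * (q a b e)\<^sup>2)"
  shows "rat_sos3 (length dqs) P"
  unfolding rat_sos3_def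
proof (intro exI conjI allI)
  show "length (map fst dqs) = length dqs" and "length (map snd dqs) = length dqs"
    by simp_all
  show "\<forall>d\<in>set (map fst dqs). 0 < d" and "\<forall>q\<in>set (map snd dqs). ratpoly3 q"
    using assms(1) by auto
  show "P a b e = (\<Sum>i<length dqs. of_rat (map fst dqs ! i) * ((map snd dqs ! i) a b e)\<^sup>2)" for a b e
    by (simp add: assms(2) sum_list_sum_nth atLeast0LessThan case_prod_beta)
qed

lemma rat_sos3_nonneg:
  assumes "rat_sos3 m P"
  shows "0 \<le> P a b e"
proof -
  obtain ds qs where len: "length ds = m" and pos: "\<forall>d\<in>set ds. 0 < d"
    and P: "\<forall>a b e. P a b e = (\<Sum>i<m. of_rat (ds ! i) * ((qs ! i) a b e)\<^sup>2)"
    using assms unfolding rat_sos3_def by blast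
  have terms_nonneg: "0 \<le> of_rat (ds ! i) * ((qs ! i) a b e)\<^sup>2" if "i < m" for i
  proof -
    have "0 < ds ! i"
      using that len pos nth_mem by blast
    then show ?thesis
      by simp
  qed
  show ?thesis
    unfolding P[rule_format] using terms_nonneg by (auto intro!: sum_nonneg)
qed

lemma Hnorm_le_if_rat_sos3:
  assumes "rat_sos3 m (\<lambda>a b e. Hnorm 3 mu (vec3 (a\<^sup>2) (b\<^sup>2) (e\<^sup>2)) - Hnorm 3 lam (vec3 (a\<^sup>2) (b\<^sup>2) (e\<^sup>2)))"
    and "nonneg_orthant 3 x"
  shows "Hnorm 3 lam x \<le> Hnorm 3 mu x"
proof -
  have "vec3 ((sqrt (x 0))\<^sup>2) ((sqrt (x 1))\<^sup>2) ((sqrt (x 2))\<^sup>2) = vec3 (x 0) (x 1) (x 2)"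
    using assms(2) by (simp add: nonneg_orthant_def)
  then have "Hnorm 3 lam (vec3 (x 0) (x 1) (x 2)) \<le> Hnorm 3 mu (vec3 (x 0) (x 1) (x 2))"
    using rat_sos3_nonneg[OF assms(1), of "sqrt (x 0)" "sqrt (x 1)" "sqrt (x 2)"] by simp
  then show ?thesis
    unfolding Hnorm_3_vec3 .
qed

definition sos_certificate :: "(rat \<times> (real \<Rightarrow> real \<Rightarrow> real \<Rightarrow> real)) list" where
  "sos_certificate = [
    (1/2570400, monomial_diff_comb (8, 0, 0) [(68, (0, 0, 8)), (-195, (0, 2, 6)), (154, (0, 4, 4)),
      (-21, (0, 6, 2)), (5, (0, 8, 0)), (-161, (2, 0, 6)), (314, (2, 2, 4)), (-158, (2, 4, 2)),
      (17, (2, 6, 0)), (85, (4, 0, 4)), (-103, (4, 2, 2)), (-15, (4, 4, 0)), (-6, (6, 0, 2)),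
      (18, (6, 2, 0))]),
    (1/199398780000, monomial_diff_comb (8, 0, 0) [(77575, (0, 2, 6)), (-133510, (0, 4, 4)),
      (49081, (0, 6, 2)), (-793, (0, 8, 0)), (-32891, (2, 0, 6)), (-8810, (2, 2, 4)),
      (59018, (2, 4, 2)), (-12325, (2, 6, 0)), (38131, (4, 0, 4)), (-30829, (4, 2, 2)),
      (-681, (4, 4, 0)), (-7766, (6, 0, 2)), (4190, (6, 2, 0))]),
    (1/12103242035850000, monomial_diff_comb (8, 0, 0) [(20637550, (0, 4, 4)),
      (-17225171, (0, 6, 2)), (1886718, (0, 8, 0)), (-835269, (2, 0, 6)), (-27090650, (2, 2, 4)),
      (16128432, (2, 4, 2)), (1017175, (2, 6, 0)), (6649349, (4, 0, 4)), (5880169, (4, 2, 2)),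
      (-4999944, (4, 4, 0)), (-2869734, (6, 0, 2)), (935275, (6, 2, 0))]),
    (1/125654684037219820350000, monomial_diff_comb (8, 0, 0) [(32215044813, (0, 6, 2)),
      (-8727502004, (0, 8, 0)), (-2128563993, (2, 0, 6)), (3875779850, (2, 2, 4)),
      (-78243311946, (2, 4, 2)), (16163910975, (2, 6, 0)), (6725770203, (4, 0, 4)),
      (41622327093, (4, 2, 2)), (4408657382, (4, 4, 0)), (-7839938748, (6, 0, 2)),
      (-8163350925, (6, 2, 0))]),
    (1/1313476901626906695322198800, monomial_diff_comb (8, 0, 0) [(1078628522242, (0, 8, 0)),
      (973768404261, (2, 0, 6)), (-534971170126, (2, 2, 4)), (967415878281, (2, 4, 2)),
      (-4112540367144, (2, 6, 0)), (-1032193380534, (4, 0, 4)), (-593803399341, (4, 2, 2)),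
      (4318016271497, (4, 4, 0)), (373700857083, (6, 0, 2)), (-1244697955824, (6, 2, 0))]),
    (1/25546752286129175856696551660400, monomial_diff_comb (8, 0, 0) [(626573462163579, (2, 0, 6)),
      (-514168133694298, (2, 2, 4)), (121625371825375, (2, 4, 2)), (-11159545041116, (2, 6, 0)),
      (-845018522849828, (4, 0, 4)), (524796784877353, (4, 2, 2)), (24821763727011, (4, 4, 0)),
      (192420087666337, (6, 0, 2)), (-117746843530360, (6, 2, 0))]),
    (1/5659049574775675591954624806860418300, monomial_diff_comb (8, 0, 0) [
      (477869923485243193, (2, 2, 4)), (-338539523947765354, (2, 4, 2)),
      (16392787567147370, (2, 6, 0)), (-209538984561944215, (4, 0, 4)),
      (-135583252036486642, (4, 2, 2)), (111316011451926636, (4, 4, 0)),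
      (121937059130010878, (6, 0, 2)), (-25756398126720440, (6, 2, 0))]),
    (1/10238983252604187872072740599431030639774400, monomial_diff_comb (8, 0, 0) [
      (566833273047746558136, (2, 4, 2)), (-216863024882344297188, (2, 6, 0)),
      (-31902847695504387961, (4, 0, 4)), (-616174376367973160622, (4, 2, 2)),
      (106766843509797715737, (4, 4, 0)), (131733445204797722478, (6, 0, 2)),
      (99057839770717411389, (6, 2, 0))]),
    (1/34309293270007963326390654779909808143730000000, monomial_diff_comb (8, 0, 0) [
      (19215243090393530325000, (2, 6, 0)), (3273435847979458929385, (4, 0, 4)),
      (2672115504334260212010, (4, 2, 2)), (-32434409396594135668005, (4, 4, 0)),
      (-1884035463343799311998, (6, 0, 2)), (11567254252581328115523, (6, 2, 0))]),
    (1/532318646405819426881731178176330387649649730000000, monomial_diff_comb (8, 0, 0) [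
      (1832204751056497674461945, (4, 0, 4)), (-1446346605548244118798430, (4, 2, 2)),
      (-174953240557394675812285, (4, 4, 0)), (-755091038365099728717486, (6, 0, 2)),
      (614976633867021886653411, (6, 2, 0))]),
    (1/342787841372245791857521271409102862028296153286546580000, monomial_diff_comb (8, 0, 0) [
      (1649826783230251223927845660, (4, 2, 2)), (-1178276204607808732347309265, (4, 4, 0)),
      (-563677075785086271769246032, (6, 0, 2)), (253211477420954349299409117, (6, 2, 0))]),
    (1/10498925577914819695315025616520034647852280297928709708620000, monomial_diff_comb (8, 0, 0) [
      (168350615189599290759978001565, (4, 4, 0)), (5311596015897872594316339464, (6, 0, 2)),
      (-97444565940915523167619898849, (6, 2, 0))]),
    (1/214969524086649803313474666534222167979881168070116199033694230000, monomial_diff_comb (8, 0, 0) [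
      (13512334220654780076818703015756, (6, 0, 2)),
      (-8759478416903673278552904304171, (6, 2, 0))]),
    (164526670629664622087969891047739/255383116770375343451873486997788400, monomial_diff_comb (8, 0, 0) [
      (1, (6, 2, 0))]),
    (1/10281600, monomial_diff_comb (7, 1, 0) [(544, (1, 1, 6)), (-736, (1, 3, 4)), (96, (1, 5, 2)),
      (-5, (1, 7, 0)), (-575, (3, 1, 4)), (783, (3, 3, 2)), (-13, (3, 5, 0)), (7, (5, 1, 2)),
      (-118, (5, 3, 0))]),
    (1/6949076400, monomial_diff_comb (7, 1, 0) [(21628, (1, 3, 4)), (-16101, (1, 5, 2)),
      (633, (1, 7, 0)), (-16863, (3, 1, 4)), (2828, (3, 3, 2)), (4801, (3, 5, 0)),
      (6893, (5, 1, 2)), (-3513, (5, 3, 0))]),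
    (1/5852433251624400, monomial_diff_comb (7, 1, 0) [(14317207, (1, 5, 2)), (-4463971, (1, 7, 0)),
      (1687381, (3, 1, 4)), (-23041060, (3, 3, 2)), (4120913, (3, 5, 0)), (5896181, (5, 1, 2)),
      (3027591, (5, 3, 0))]),
    (1/450316347698301174921600, monomial_diff_comb (7, 1, 0) [(52005302481, (1, 7, 0)),
      (7363497347, (3, 1, 4)), (28481640557, (3, 3, 2)), (-132853445479, (3, 5, 0)),
      (-21442868107, (5, 1, 2)), (78164827518, (5, 3, 0))]),
    (1/12490832140707406635823766400, monomial_diff_comb (7, 1, 0) [(12708138553696, (3, 1, 4)),
      (-14089436056472, (3, 3, 2)), (1718951283430, (3, 5, 0)), (-2910490314995, (5, 1, 2)),
      (3146393870073, (5, 3, 0))]),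
    (1/10938529952663337618848822131200, monomial_diff_comb (7, 1, 0) [(364338614098784, (3, 3, 2)),
      (-246416408392238, (3, 5, 0)), (-233159015627601, (5, 1, 2)), (99733100355403, (5, 3, 0))]),
    (1/1033536380914988306760418870606732800, monomial_diff_comb (7, 1, 0) [
      (75046210424253714, (3, 5, 0)), (9055913319657071, (5, 1, 2)),
      (-99187000658641557, (5, 3, 0))]),
    (1/1193950283718292560027257662707065849700, monomial_diff_comb (7, 1, 0) [
      (1683548638269185389, (5, 1, 2)), (-1218168145760596335, (5, 3, 0))]),
    (49237503276768813011/31819069263287603852100, monomial_diff_comb (7, 1, 0) [(1, (5, 3, 0))]),
    (1/3383100, monomial_diff_comb (7, 0, 1) [(179, (1, 0, 7)), (-235, (1, 2, 5)), (44, (1, 4, 3)),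
      (-5, (1, 6, 1)), (-341, (3, 0, 5)), (392, (3, 2, 3)), (-32, (3, 4, 1)), (122, (5, 0, 3)),
      (-120, (5, 2, 1))]),
    (1/651283964100, monomial_diff_comb (7, 0, 1) [(192511, (1, 2, 5)), (-182622, (1, 4, 3)),
      (16009, (1, 6, 1)), (-84252, (3, 0, 5)), (-96009, (3, 2, 3)), (120644, (3, 4, 1)),
      (77716, (5, 0, 3)), (-33391, (5, 2, 1))]),
    (1/7463816105407200, monomial_diff_comb (7, 0, 1) [(22565048, (1, 4, 3)),
      (-11374414, (1, 6, 1)), (-1097000, (3, 0, 5)), (-26219447, (3, 2, 3)), (7582010, (3, 4, 1)),
      (5860669, (5, 0, 3)), (4349658, (5, 2, 1))]),
    (1/60787509191842296679200, monomial_diff_comb (7, 0, 1) [(25915142002, (1, 6, 1)),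
      (-1859147704, (3, 0, 5)), (10346609289, (3, 2, 3)), (-51326169666, (3, 4, 1)),
      (2246938557, (5, 0, 3)), (17926324578, (5, 2, 1))]),
    (1/670422334482982837464231600, monomial_diff_comb (7, 0, 1) [(2737556382044, (3, 0, 5)),
      (-2498476544840, (3, 2, 3)), (419845867943, (3, 4, 1)), (-2189768490817, (5, 0, 3)),
      (1350203362888, (5, 2, 1))]),
    (1/12393064938720858025473112719600, monomial_diff_comb (7, 0, 1) [(479053308948362, (3, 2, 3)),
      (-329477943829509, (3, 4, 1)), (-213530371984526, (5, 0, 3)), (13664229926372, (5, 2, 1))]),
    (1/1261852960990688624602673324976117600, monomial_diff_comb (7, 0, 1) [
      (69684005603978566, (3, 4, 1)), (-20421711835639739, (5, 0, 3)),
      (-62373941876519104, (5, 2, 1))]),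
    (1/76462946844552530371166602776208105010400, monomial_diff_comb (7, 0, 1) [
      (14514301123114732249, (5, 0, 3)), (-9549127222636189248, (5, 2, 1))]),
    (72152290805180699738/68580072806717109876525, monomial_diff_comb (7, 0, 1) [(1, (5, 2, 1))]),
    (1/4025700, monomial_diff_comb (6, 1, 1) [(213, (0, 1, 7)), (-501, (0, 3, 5)), (270, (0, 5, 3)),
      (-25, (0, 7, 1)), (-215, (2, 1, 5)), (463, (2, 3, 3)), (-165, (2, 5, 1)), (-7, (4, 1, 3)),
      (-38, (4, 3, 1))]),
    (1/70845610500, monomial_diff_comb (6, 1, 1) [(52795, (0, 3, 5)), (-66593, (0, 5, 3)),
      (14995, (0, 7, 1)), (-44709, (2, 1, 5)), (30319, (2, 3, 3)), (10998, (2, 5, 1)),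
      (24746, (4, 1, 3)), (-20688, (4, 3, 1))]),
    (1/20897630074660500, monomial_diff_comb (6, 1, 1) [(20943171, (0, 5, 3)),
      (-10712960, (0, 7, 1)), (1175083, (2, 1, 5)), (-37551458, (2, 3, 3)), (14811104, (2, 5, 1)),
      (13013878, (4, 1, 3)), (2409371, (4, 3, 1))]),
    (1/383688275254325048700, monomial_diff_comb (6, 1, 1) [(969335873, (0, 7, 1)),
      (-20920858, (2, 1, 5)), (674887835, (2, 3, 3)), (-2824365566, (2, 5, 1)),
      (-245528365, (4, 1, 3)), (1982119969, (4, 3, 1))]),
    (1/76150234361378504743208100, monomial_diff_comb (6, 1, 1) [(1385523511991, (2, 1, 5)),
      (-1469776474153, (2, 3, 3)), (229664164928, (2, 5, 1)), (-977076662967, (4, 1, 3)),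
      (826956911559, (4, 3, 1))]),
    (1/28569348888948757655290902995100, monomial_diff_comb (6, 1, 1) [
      (1090999718328749, (2, 3, 3)), (-588306001134588, (2, 5, 1)), (-795607818777570, (4, 1, 3)),
      (117121008261225, (4, 3, 1))]),
    (1/5275859045504848981939602965465750700, monomial_diff_comb (6, 1, 1) [
      (255862560323345787, (2, 5, 1)), (32226227499615657, (4, 1, 3)),
      (-367454127243729442, (4, 3, 1))]),
    (1/17988125165701145859088384932061914550200, monomial_diff_comb (6, 1, 1) [
      (11159342575175435142, (4, 1, 3)), (-9334947926812468541, (4, 3, 1))]),
    (1211996275190177897153/632734724012447172551400, monomial_diff_comb (6, 1, 1) [(1, (4, 3, 1))])]"

lemma sos_certificate_identity:
  "form_44_521 (a\<^sup>2) (b\<^sup>2) (e\<^sup>2) = 9450 * (\<Sum>(d, q) \<leftarrow> sos_certificate. of_rat d * (q a b e)\<^sup>2)"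
  by (simp add: sos_certificate_def monomial_diff_comb_def monomial3_def form_44_521_def
      monomial_symmetric3_def of_rat_divide of_rat_minus) algebra

lemma rat_sos3_H44_H521:
  "rat_sos3 41 (\<lambda>a b e. Hnorm 3 [4, 4] (vec3 (a\<^sup>2) (b\<^sup>2) (e\<^sup>2)) - Hnorm 3 [5, 2, 1] (vec3 (a\<^sup>2) (b\<^sup>2) (e\<^sup>2)))"
proof -
  have length: "length sos_certificate = 41"
    by (simp add: sos_certificate_def)
  have positive: "\<forall>(d, q) \<in> set sos_certificate. 0 < d \<and> ratpoly3 q"
    by (simp add: sos_certificate_def ratpoly3_monomial_diff_comb)
  have identity: "Hnorm 3 [4, 4] (vec3 (a\<^sup>2) (b\<^sup>2) (e\<^sup>2)) - Hnorm 3 [5, 2, 1] (vec3 (a\<^sup>2) (b\<^sup>2) (e\<^sup>2))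
      = (\<Sum>(d, q) \<leftarrow> sos_certificate. of_rat d * (q a b e)\<^sup>2)" for a b e
    unfolding Hnorm_44_minus_521 sos_certificate_identity by simp
  show ?thesis
    using rat_sos3_sum_list[OF positive identity] unfolding length .
qed

fun bounded_partitions :: "nat \<Rightarrow> nat \<Rightarrow> nat \<Rightarrow> nat list list" where
  "bounded_partitions 0 m n = (if n = 0 then [[]] else [])"
| "bounded_partitions (Suc l) m n = (if n = 0 then [[]] else
     concat (map (\<lambda>k. map ((#) k) (bounded_partitions l k (n - k))) [1..<Suc (min m n)]))"

lemma mem_bounded_partitions:
  assumes "is_partition lam" and "length lam \<le> l" and "\<forall>x\<in>set lam. x \<le> m"
  shows "lam \<in> set (bounded_partitions l m (sum_list lam))"
  using assms
proof (induction lam arbitrary: l m)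
  case Nil
  then show ?case
    by (cases l) auto
next
  case (Cons x xs)
  then obtain l' where l: "l = Suc l'"
    by (cases l) auto
  have x: "1 \<le> x" "x \<le> m"
    using Cons.prems by (auto simp: is_partition_def)
  have xs: "xs \<in> set (bounded_partitions l' x (sum_list xs))"
    using Cons.prems l by (intro Cons.IH) (auto simp: is_partition_def)
  have k: "x \<in> set [1..<Suc (min m (sum_list (x # xs)))]"
    using x by auto
  have "x # xs \<in> (\<Union>k\<in>set [1..<Suc (min m (sum_list (x # xs)))].
      (#) k ` set (bounded_partitions l' k (sum_list (x # xs) - k)))"
    using xs by (intro UN_I[OF k]) simp
  moreover have "sum_list (x # xs) \<noteq> 0"
    using x by simp
  ultimately show ?case
    by (simp only: l bounded_partitions.simps if_False set_concat set_map image_image)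
qed

definition partitions :: "nat \<Rightarrow> nat list list" where
  "partitions n = bounded_partitions n n n"

lemma mem_partitions:
  assumes "is_partition lam"
  shows "lam \<in> set (partitions (sum_list lam))"
proof -
  have "length lam \<le> sum_list lam"
    using assms by (induction lam) (auto simp: is_partition_def Suc_le_eq)
  moreover have "\<forall>x\<in>set lam. x \<le> sum_list lam"
    by (simp add: member_le_sum_list)
  ultimately show ?thesis
    unfolding partitions_def by (intro mem_bounded_partitions assms)
qed

lemma dominates_code [code]:
  "dominates mu lam \<longleftrightarrow> sum_list mu = sum_list lam \<and>
     (\<forall>k\<in>set [0..<Suc (max (length lam) (length mu))]. sum_list (take k lam) \<le> sum_list (take k mu))"
proof -
  have "sum_list (take k lam) \<le> sum_list (take k mu)"
    if "\<forall>k\<le>max (length lam) (length mu). sum_list (take k lam) \<le> sum_list (take k mu)" for k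
    using that by (cases "k \<le> max (length lam) (length mu)") auto
  then show ?thesis
    unfolding dominates_def by (auto simp: less_Suc_eq_le)
qed

definition separating_points :: "(nat list \<times> nat list \<times> real \<times> real \<times> real) list" where
  "separating_points =
    [([4, 1, 1], [3, 3], 2, 2, 3), ([3, 3], [4, 1, 1], 0, 0, 1),
     ([3, 1, 1, 1], [2, 2, 2], 1, 1, 2), ([2, 2, 2], [3, 1, 1, 1], 0, 0, 1),
     ([5, 1, 1], [4, 3], 1, 1, 2), ([4, 3], [5, 1, 1], 0, 0, 1),
     ([4, 1, 1, 1], [3, 3, 1], 2, 2, 3), ([3, 3, 1], [4, 1, 1, 1], 0, 0, 1),
     ([4, 1, 1, 1], [3, 2, 2], 0, 1, 2), ([3, 2, 2], [4, 1, 1, 1], 0, 0, 1),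
     ([3, 1, 1, 1, 1], [2, 2, 2, 1], 1, 1, 2), ([2, 2, 2, 1], [3, 1, 1, 1, 1], 0, 0, 1)]"

lemma separating_points_separate:
  assumes "(lam, mu, a, b, c) \<in> set separating_points"
  shows "nonneg_orthant 3 (vec3 a b c) \<and> Hnorm 3 mu (vec3 a b c) < Hnorm 3 lam (vec3 a b c)"
  using assms unfolding separating_points_def
  by (auto simp: nonneg_orthant_def vec3_def Hnorm_def hpart_def hcomp_3_eq atMost_nat_numeral)

lemma incomparable_partitions_upto_7_listed:
  "\<forall>n\<in>set [0..<8]. \<forall>lam\<in>set (partitions n). \<forall>mu\<in>set (partitions n).
     incomparable lam mu \<longrightarrow> (lam, mu) \<in> set (map (\<lambda>(lam, mu, _). (lam, mu)) separating_points)"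
  unfolding separating_points_def incomparable_def by code_simp

theorem theorem1p2:
  shows "rat_sos3 41 (\<lambda>a b e. Hnorm 3 [4,4] (vec3 (a\<^sup>2) (b\<^sup>2) (e\<^sup>2))
                              - Hnorm 3 [5,2,1] (vec3 (a\<^sup>2) (b\<^sup>2) (e\<^sup>2)))
    \<and> (\<forall>x. nonneg_orthant 3 x \<longrightarrow> Hnorm 3 [4,4] x - Hnorm 3 [5,2,1] x \<ge> 0)
    \<and> incomparable [4,4] [5,2,1]
    \<and> (\<forall>lam mu. is_partition lam \<and> is_partition mu \<and> sum_list lam = sum_list mu
          \<and> sum_list lam \<le> 7 \<and> incomparable lam mu \<longrightarrow>
          \<not> (\<forall>x. nonneg_orthant 3 x \<longrightarrow> Hnorm 3 mu x - Hnorm 3 lam x \<ge> 0))"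
proof (intro conjI allI impI)
  show "rat_sos3 41 (\<lambda>a b e. Hnorm 3 [4,4] (vec3 (a\<^sup>2) (b\<^sup>2) (e\<^sup>2))
                              - Hnorm 3 [5,2,1] (vec3 (a\<^sup>2) (b\<^sup>2) (e\<^sup>2)))"
    by (rule rat_sos3_H44_H521)
  then show "Hnorm 3 [4,4] x - Hnorm 3 [5,2,1] x \<ge> 0" if "nonneg_orthant 3 x" for x
    using Hnorm_le_if_rat_sos3 that by simp
  show "incomparable [4,4] [5,2,1]"
    by (simp add: incomparable_def dominates_code)
  fix lam mu
  assume "is_partition lam \<and> is_partition mu \<and> sum_list lam = sum_list mu
    \<and> sum_list lam \<le> 7 \<and> incomparable lam mu"
  then have "(lam, mu) \<in> set (map (\<lambda>(lam, mu, _). (lam, mu)) separating_points)"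
    using incomparable_partitions_upto_7_listed mem_partitions by fastforce
  then obtain a b c where "(lam, mu, a, b, c) \<in> set separating_points"
    by auto
  then show "\<not> (\<forall>x. nonneg_orthant 3 x \<longrightarrow> Hnorm 3 mu x - Hnorm 3 lam x \<ge> 0)"
    using separating_points_separate by force
qed

end
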